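(* Let $n\ge1$, let $\gamma,\beta$ be proper $3$-colorings of the $2\times n$ grid graph $M^*_{2,n}$, let $H$ be an integer, and set $y_{i,j}=H+h_{\gamma,v_{1,1}}(\beta,v_{i,j})$ for $i\in\{1,2\}$, $1\le j\le n$. When the multiset $Y=\{y_{i,j}\}$ is listed from lowest to highest, any two consecutive values differ by $0$ or $2$.
   Context: $M^*_{2,n}$ is the grid graph with vertices $v_{i,j}$ ($i\in\{1,2\}$, $1\le j\le n$), $v_{i,j}$ adjacent to $v_{i,j\pm1}$ and $v_{3-i,j}$. Colors lie in $\mathbb{Z}_3$. For a proper $3$-coloring $\gamma$ and an edge traversed from $a$ to $b$, its weight $w(\gamma,\overrightarrow{ab})\in\{1,-1\}$ is congruent to $\gamma(b)-\gamma(a)$ mod $3$; the weight $w(\gamma,P)$ of a directed path is the sum of its edge weights. For any proper $3$-coloring the weight of a directed path from $u$ to $v$ depends only on $u,v$. The relative height is $h_{\gamma,u}(\beta,v)=w(\beta,P_{u,v})-w(\gamma,P_{u,v})$ for any directed path $P_{u,v}$ from $u$ to $v$. *)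

theory Defs
  imports "HOL-Library.Multiset"
begin

definition grid_V :: "nat \<Rightarrow> (nat \<times> nat) set" where
  "grid_V n = {1,2} \<times> {1..n}"

definition grid_adj :: "nat \<Rightarrow> nat \<times> nat \<Rightarrow> nat \<times> nat \<Rightarrow> bool" where
  "grid_adj n u v \<longleftrightarrow> u \<in> grid_V n \<and> v \<in> grid_V n \<and>
     ((fst u = fst v \<and> (snd v = snd u + 1 \<or> snd u = snd v + 1)) \<or>
      (snd u = snd v \<and> fst u \<noteq> fst v))"

text \<open>Colours in Z_3 are represented by the integers 0, 1, 2.\<close>
definition proper3 :: "nat \<Rightarrow> (nat \<times> nat \<Rightarrow> int) \<Rightarrow> bool" where
  "proper3 n c \<longleftrightarrow> (\<forall>v\<in>grid_V n. c v \<in> {0,1,2}) \<and>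
     (\<forall>u v. grid_adj n u v \<longrightarrow> c u \<noteq> c v)"

definition edge_weight :: "(nat \<times> nat \<Rightarrow> int) \<Rightarrow> nat \<times> nat \<Rightarrow> nat \<times> nat \<Rightarrow> int" where
  "edge_weight c a b = (if (c b - c a) mod 3 = 1 then 1 else -1)"

fun path_weight :: "(nat \<times> nat \<Rightarrow> int) \<Rightarrow> (nat \<times> nat) list \<Rightarrow> int" where
  "path_weight c (a # b # rest) = edge_weight c a b + path_weight c (b # rest)"
| "path_weight c _ = 0"

definition is_dpath :: "nat \<Rightarrow> (nat \<times> nat) list \<Rightarrow> nat \<times> nat \<Rightarrow> nat \<times> nat \<Rightarrow> bool" where
  "is_dpath n P u v \<longleftrightarrow> P \<noteq> [] \<and> hd P = u \<and> last P = v \<and> distinct P \<and>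
     (\<forall>k. Suc k < length P \<longrightarrow> grid_adj n (P ! k) (P ! Suc k))"

definition rel_height ::
  "nat \<Rightarrow> (nat \<times> nat \<Rightarrow> int) \<Rightarrow> nat \<times> nat \<Rightarrow> (nat \<times> nat \<Rightarrow> int) \<Rightarrow> nat \<times> nat \<Rightarrow> int" where
  "rel_height n \<gamma> u \<beta> v =
     (let P = (SOME P. is_dpath n P u v) in path_weight \<beta> P - path_weight \<gamma> P)"

end

theory Submission
  imports Defs
begin

text \<open>Along the ladder the edge weights of a proper 3-colouring are exact differences of a height
function, because every 4-cycle has total weight 0.  Hence the relative height changes by at most 2
along an edge, and it is always even since each edge contributes a difference of two signs.  On a
connected graph such a function skips no value of its parity between its minimum and maximum, so
consecutive sorted values differ by 0 or 2.\<close>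

lemma rtranclp_crossing_edge:
  assumes "R\<^sup>*\<^sup>* u w" "Q u" "\<not> Q w"
  shows "\<exists>x y. R x y \<and> Q x \<and> \<not> Q y"
  using assms by (induction rule: rtranclp_induct) auto

lemma rtranclp_hd_last_if_successively:
  "successively R xs \<Longrightarrow> xs \<noteq> [] \<Longrightarrow> R\<^sup>*\<^sup>* (hd xs) (last xs)"
  by (induction R xs rule: successively.induct) auto

lemma sorted_nth_Suc_no_elem_between:
  assumes "sorted xs" "Suc k < length xs" "x \<in> set xs"
  shows "x \<le> xs ! k \<or> xs ! Suc k \<le> x"
proof -
  obtain m where m: "m < length xs" "x = xs ! m"
    using assms(3) by (auto simp: in_set_conv_nth)
  show ?thesis
  proof (cases "m \<le> k")
    case True
    then show ?thesis using sorted_nth_mono[OF assms(1), of m k] m assms(2) by simp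
  next
    case False
    then show ?thesis using sorted_nth_mono[OF assms(1), of "Suc k" m] m by simp
  qed
qed

lemma consecutive_values_diff_le:
  fixes f :: "'a \<Rightarrow> int"
  assumes connected: "\<And>u w. u \<in> S \<Longrightarrow> w \<in> S \<Longrightarrow> E\<^sup>*\<^sup>* u w"
    and closed: "\<And>x y. E x y \<Longrightarrow> y \<in> S"
    and step: "\<And>x y. E x y \<Longrightarrow> f y - f x \<le> m"
    and attained: "a \<in> f ` S" "b \<in> f ` S" "a < b"
    and gap: "\<And>x. x \<in> S \<Longrightarrow> f x \<le> a \<or> b \<le> f x"
  shows "b - a \<le> m"
proof -
  obtain u w where "u \<in> S" "w \<in> S" "f u = a" "f w = b"
    using attained(1,2) by blast
  then obtain x y where xy: "E x y" "f x \<le> a" "\<not> f y \<le> a"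
    using rtranclp_crossing_edge[of E u w "\<lambda>v. f v \<le> a"] connected attained(3) by auto
  then have "b \<le> f y" using gap closed by blast
  then show ?thesis using step[OF xy(1)] xy(2) by linarith
qed

lemma path_weight_telescope:
  assumes "successively (\<lambda>a b. edge_weight c a b = p b - p a) P" "P \<noteq> []"
  shows "path_weight c P = p (last P) - p (hd P)"
  using assms by (induction c P rule: path_weight.induct) auto

lemma even_path_weight_diff: "even (path_weight \<beta> P - path_weight \<gamma> P)"
  by (induction \<beta> P rule: path_weight.induct) (auto simp: edge_weight_def)

lemma even_rel_height: "even (rel_height n \<gamma> u \<beta> v)"
  unfolding rel_height_def Let_def by (rule even_path_weight_diff)

lemma edge_weight_antisym:
  assumes "c u \<in> {0,1,2}" "c v \<in> {0,1,2}" "c u \<noteq> c v"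
  shows "edge_weight c v u = - edge_weight c u v"
  using assms by (auto simp: edge_weight_def)

text \<open>The weights are \<open>\<equiv> c b - c a (mod 3)\<close>, so the weight of the closed 4-cycle is a
multiple of 3 in \<open>{-4,-2,0,2,4}\<close>, i.e. 0.\<close>
lemma edge_weight_square:
  assumes "c ` {a, b, d, e} \<subseteq> {0,1,2}" "c a \<noteq> c b" "c b \<noteq> c e" "c a \<noteq> c d" "c d \<noteq> c e"
  shows "edge_weight c a b + edge_weight c b e = edge_weight c a d + edge_weight c d e"
  using assms by (auto simp: edge_weight_def)

lemma grid_adj_sym: "grid_adj n u v \<Longrightarrow> grid_adj n v u"
  by (auto simp: grid_adj_def)

lemma grid_adj_in_grid_V: "grid_adj n u v \<Longrightarrow> u \<in> grid_V n \<and> v \<in> grid_V n"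
  by (simp add: grid_adj_def)

lemma grid_adj_cases:
  assumes "grid_adj n u v"
  obtains (horizontal) i j where "{u, v} = {(i, j), (i, Suc j)}" "i \<in> {1, 2}" "1 \<le> j" "Suc j \<le> n"
    | (vertical) j where "{u, v} = {(1, j), (2, j)}"
  using assms unfolding grid_adj_def grid_V_def
  by (cases u; cases v) (auto simp: doubleton_eq_iff)

lemma proper3_colour: "proper3 n c \<Longrightarrow> v \<in> grid_V n \<Longrightarrow> c v \<in> {0,1,2}"
  by (simp add: proper3_def)

lemma proper3_adj_neq: "proper3 n c \<Longrightarrow> grid_adj n u v \<Longrightarrow> c u \<noteq> c v"
  unfolding proper3_def by blast

lemma proper3_edge_weight_antisym:
  assumes "proper3 n c" "grid_adj n u v"
  shows "edge_weight c v u = - edge_weight c u v"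
  using assms grid_adj_in_grid_V[OF assms(2)]
  by (intro edge_weight_antisym proper3_colour proper3_adj_neq) auto

text \<open>Row 1 is integrated from the column 0 outside the grid; the resulting constant offset is
harmless because only differences of heights are used.\<close>
fun top_height :: "(nat \<times> nat \<Rightarrow> int) \<Rightarrow> nat \<Rightarrow> int" where
  "top_height c 0 = 0"
| "top_height c (Suc j) = top_height c j + edge_weight c (1, j) (1, Suc j)"

definition grid_height :: "(nat \<times> nat \<Rightarrow> int) \<Rightarrow> nat \<times> nat \<Rightarrow> int" where
  "grid_height c v = (if fst v = 1 then top_height c (snd v)
                      else top_height c (snd v) + edge_weight c (1, snd v) (2, snd v))"

lemma edge_weight_eq_height_diff:
  assumes c: "proper3 n c" and uv: "grid_adj n u v"
  shows "edge_weight c u v = grid_height c v - grid_height c u"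
proof -
  have horizontal:
    "edge_weight c (i, j) (i, Suc j) = grid_height c (i, Suc j) - grid_height c (i, j)"
    if "i \<in> {1, 2}" "1 \<le> j" "Suc j \<le> n" for i j
  proof (cases "i = 1")
    case True
    then show ?thesis by (simp add: grid_height_def)
  next
    case False
    have "edge_weight c (1, j) (1, Suc j) + edge_weight c (1, Suc j) (2, Suc j) =
          edge_weight c (1, j) (2, j) + edge_weight c (2, j) (2, Suc j)"
      using that
      by (intro edge_weight_square proper3_adj_neq[OF c] image_subsetI proper3_colour[OF c])
         (auto simp: grid_adj_def grid_V_def)
    with False that show ?thesis by (simp add: grid_height_def)
  qed
  have vertical: "edge_weight c (1, j) (2, j) = grid_height c (2, j) - grid_height c (1, j)" for j
    by (simp add: grid_height_def)
  from uv show ?thesis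
    using proper3_edge_weight_antisym[OF c uv]
    by (cases rule: grid_adj_cases)
       (auto simp: doubleton_eq_iff horizontal vertical[unfolded One_nat_def])
qed

lemma is_dpath_iff_successively:
  "is_dpath n P u v \<longleftrightarrow>
     P \<noteq> [] \<and> hd P = u \<and> last P = v \<and> distinct P \<and> successively (grid_adj n) P"
  by (simp add: is_dpath_def successively_conv_nth)

lemma dpath_weight_eq_height_diff:
  assumes "proper3 n c" "is_dpath n P u v"
  shows "path_weight c P = grid_height c v - grid_height c u"
proof -
  have "successively (\<lambda>a b. edge_weight c a b = grid_height c b - grid_height c a) P"
    using assms(2) edge_weight_eq_height_diff[OF assms(1)]
    by (auto simp: is_dpath_iff_successively elim: successively_mono)
  then show ?thesis
    using path_weight_telescope assms(2) by (auto simp: is_dpath_iff_successively)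
qed

lemma rel_height_eq_height_diff:
  assumes "proper3 n \<gamma>" "proper3 n \<beta>" "\<exists>P. is_dpath n P u v"
  shows "rel_height n \<gamma> u \<beta> v =
           (grid_height \<beta> v - grid_height \<gamma> v) - (grid_height \<beta> u - grid_height \<gamma> u)"
proof -
  have "is_dpath n (SOME P. is_dpath n P u v) u v"
    using someI_ex[OF assms(3)] .
  then show ?thesis
    using dpath_weight_eq_height_diff assms(1,2) by (simp add: rel_height_def Let_def)
qed

lemma dpath_from_corner:
  assumes "v \<in> grid_V n"
  shows "\<exists>P. is_dpath n P (1, 1) v"
proof -
  obtain i j where v: "v = (i, j)" "i \<in> {1, 2}" "1 \<le> j" "j \<le> n"
    using assms by (auto simp: grid_V_def)
  define row where "row = map (Pair (1::nat)) [1..<Suc j]"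
  define P where "P = row @ (if i = 1 then [] else [(2, j)])"
  have "successively (grid_adj n) row"
    using v by (auto simp: row_def successively_conv_nth grid_adj_def grid_V_def simp del: upt_Suc)
  moreover have "row \<noteq> []" "hd row = (1, 1)" "last row = (1, j)" "distinct row" "(2, j) \<notin> set row"
    using v by (auto simp: row_def hd_map last_map distinct_map inj_on_def simp del: upt_Suc)
  moreover have "grid_adj n (1, j) (2, j)"
    using v by (auto simp: grid_adj_def grid_V_def)
  ultimately have "is_dpath n P (1, 1) v"
    using v by (auto simp: P_def is_dpath_iff_successively successively_append_iff)
  then show ?thesis ..
qed

lemma grid_connected:
  assumes "u \<in> grid_V n" "w \<in> grid_V n"
  shows "(grid_adj n)\<^sup>*\<^sup>* u w"
proof -
  have from_corner: "(grid_adj n)\<^sup>*\<^sup>* (1, 1) v" if v: "v \<in> grid_V n" for v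
  proof -
    obtain P where "is_dpath n P (1, 1) v"
      using dpath_from_corner[OF v] ..
    then show ?thesis
      using rtranclp_hd_last_if_successively[of "grid_adj n" P]
      by (auto simp: is_dpath_iff_successively)
  qed
  have "symp (grid_adj n)"
    by (auto intro: sympI grid_adj_sym)
  then have "(grid_adj n)\<^sup>*\<^sup>* u (1, 1)"
    using from_corner[OF assms(1)] by (blast dest: sympD[OF symp_rtranclp])
  then show ?thesis
    using from_corner[OF assms(2)] by simp
qed

lemma rel_height_step_le:
  assumes "proper3 n \<gamma>" "proper3 n \<beta>" "grid_adj n x y"
  shows "rel_height n \<gamma> (1, 1) \<beta> y - rel_height n \<gamma> (1, 1) \<beta> x \<le> 2"
proof -
  have "rel_height n \<gamma> (1, 1) \<beta> y - rel_height n \<gamma> (1, 1) \<beta> x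
          = edge_weight \<beta> x y - edge_weight \<gamma> x y"
    using assms grid_adj_in_grid_V[OF assms(3)] dpath_from_corner
    by (simp add: rel_height_eq_height_diff edge_weight_eq_height_diff)
  then show ?thesis by (simp add: edge_weight_def)
qed

theorem lemma5p6:
  fixes n :: nat and \<gamma> \<beta> :: "nat \<times> nat \<Rightarrow> int" and H :: int
  assumes "n \<ge> 1" and "proper3 n \<gamma>" and "proper3 n \<beta>"
  defines "Y \<equiv> image_mset (\<lambda>v. H + rel_height n \<gamma> (1,1) \<beta> v) (mset_set (grid_V n))"
  shows "\<forall>k. Suc k < size Y \<longrightarrow>
           sorted_list_of_multiset Y ! Suc k - sorted_list_of_multiset Y ! k \<in> {0, 2}"
proof (intro allI impI)
  fix k assume k: "Suc k < size Y"
  define f where "f = (\<lambda>v. H + rel_height n \<gamma> (1,1) \<beta> v)"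
  define s where "s = sorted_list_of_multiset Y"
  have s: "sorted s" "length s = size Y" "set s = f ` grid_V n"
    by (simp_all add: s_def Y_def f_def grid_V_def flip: size_mset)
  have ab: "s ! k \<le> s ! Suc k" "s ! k \<in> f ` grid_V n" "s ! Suc k \<in> f ` grid_V n"
    using k s sorted_nth_mono[OF s(1), of k "Suc k"] by (auto simp flip: s(3))
  have "even (s ! Suc k - s ! k)"
    using ab(2,3) even_rel_height by (auto simp: f_def)
  moreover have "s ! Suc k - s ! k \<le> 2" if "s ! k < s ! Suc k"
  proof (rule consecutive_values_diff_le[OF grid_connected _ _ ab(2,3) that])
    show "f y - f x \<le> 2" if "grid_adj n x y" for x y
      using rel_height_step_le[OF assms(2,3) that] by (simp add: f_def)
    show "f x \<le> s ! k \<or> s ! Suc k \<le> f x" if "x \<in> grid_V n" for x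
      using sorted_nth_Suc_no_elem_between[OF s(1)] k that s(2,3) by simp
  qed (use grid_adj_in_grid_V in auto)
  ultimately have "s ! Suc k - s ! k \<in> {0, 2}"
    using ab(1) by (cases "s ! k < s ! Suc k") (simp_all, presburger)
  then show "sorted_list_of_multiset Y ! Suc k - sorted_list_of_multiset Y ! k \<in> {0, 2}"
    by (simp add: s_def)
qed

end
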